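(* Let $\Gamma$ be a $2$-arc-transitive strongly regular graph. Then either $\Gamma$ is a complete bipartite graph, or $\Gamma\cong C_5$, or $|\Gamma(u)|<|\Gamma_2(u)|$ for every vertex $u$.
   Context: A strongly regular graph with parameters $(n,k,a,c)$ is a connected $k$-regular graph on $n$ vertices in which adjacent vertices have $a$ common neighbours and distinct non-adjacent vertices have $c$ common neighbours (here of diameter $2$, i.e. non-complete). $2$-arc-transitive means $\mathrm{Aut}(\Gamma)$ is transitive on vertices, on arcs and on $2$-arcs $(v_0,v_1,v_2)$ ($v_0\sim v_1\sim v_2$, $v_0\ne v_2$). $\Gamma(u)$ is the set of neighbours of $u$ and $\Gamma_2(u)$ the set of vertices at distance $2$ from $u$. *)

theory Defs
  imports Main
begin

definition simple_graph :: "'a set \<Rightarrow> ('a \<Rightarrow> 'a \<Rightarrow> bool) \<Rightarrow> bool" where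
  "simple_graph V E \<longleftrightarrow> finite V \<and> V \<noteq> {} \<and>
     (\<forall>x y. E x y \<longrightarrow> x \<in> V \<and> y \<in> V) \<and>
     (\<forall>x y. E x y \<longrightarrow> E y x) \<and> (\<forall>x. \<not> E x x)"

definition nbrs :: "'a set \<Rightarrow> ('a \<Rightarrow> 'a \<Rightarrow> bool) \<Rightarrow> 'a \<Rightarrow> 'a set" where
  "nbrs V E u = {v \<in> V. E u v}"

definition nbrs2 :: "'a set \<Rightarrow> ('a \<Rightarrow> 'a \<Rightarrow> bool) \<Rightarrow> 'a \<Rightarrow> 'a set" where
  "nbrs2 V E u = {w \<in> V. w \<noteq> u \<and> \<not> E u w \<and> (\<exists>v. E u v \<and> E v w)}"

definition graph_connected :: "'a set \<Rightarrow> ('a \<Rightarrow> 'a \<Rightarrow> bool) \<Rightarrow> bool" where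
  "graph_connected V E \<longleftrightarrow> (\<forall>u\<in>V. \<forall>v\<in>V. E\<^sup>*\<^sup>* u v)"

definition strongly_regular ::
  "'a set \<Rightarrow> ('a \<Rightarrow> 'a \<Rightarrow> bool) \<Rightarrow> nat \<Rightarrow> nat \<Rightarrow> nat \<Rightarrow> nat \<Rightarrow> bool" where
  "strongly_regular V E n k a c \<longleftrightarrow>
     simple_graph V E \<and> card V = n \<and> graph_connected V E \<and>
     (\<exists>x\<in>V. \<exists>y\<in>V. x \<noteq> y \<and> \<not> E x y) \<and>
     (\<forall>u\<in>V. card (nbrs V E u) = k) \<and>
     (\<forall>x\<in>V. \<forall>y\<in>V. E x y \<longrightarrow> card (nbrs V E x \<inter> nbrs V E y) = a) \<and>
     (\<forall>x\<in>V. \<forall>y\<in>V. x \<noteq> y \<and> \<not> E x y \<longrightarrow> card (nbrs V E x \<inter> nbrs V E y) = c)"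

definition is_aut :: "'a set \<Rightarrow> ('a \<Rightarrow> 'a \<Rightarrow> bool) \<Rightarrow> ('a \<Rightarrow> 'a) \<Rightarrow> bool" where
  "is_aut V E \<sigma> \<longleftrightarrow> bij_betw \<sigma> V V \<and> (\<forall>x\<in>V. \<forall>y\<in>V. E x y \<longleftrightarrow> E (\<sigma> x) (\<sigma> y))"

definition two_arc_transitive :: "'a set \<Rightarrow> ('a \<Rightarrow> 'a \<Rightarrow> bool) \<Rightarrow> bool" where
  "two_arc_transitive V E \<longleftrightarrow>
     (\<forall>u\<in>V. \<forall>v\<in>V. \<exists>\<sigma>. is_aut V E \<sigma> \<and> \<sigma> u = v) \<and>
     (\<forall>u0 u1 v0 v1. E u0 u1 \<and> E v0 v1 \<longrightarrow>
        (\<exists>\<sigma>. is_aut V E \<sigma> \<and> \<sigma> u0 = v0 \<and> \<sigma> u1 = v1)) \<and>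
     (\<forall>u0 u1 u2 v0 v1 v2. E u0 u1 \<and> E u1 u2 \<and> u0 \<noteq> u2 \<and> E v0 v1 \<and> E v1 v2 \<and> v0 \<noteq> v2 \<longrightarrow>
        (\<exists>\<sigma>. is_aut V E \<sigma> \<and> \<sigma> u0 = v0 \<and> \<sigma> u1 = v1 \<and> \<sigma> u2 = v2))"

definition complete_bipartite :: "'a set \<Rightarrow> ('a \<Rightarrow> 'a \<Rightarrow> bool) \<Rightarrow> bool" where
  "complete_bipartite V E \<longleftrightarrow>
     (\<exists>A B. A \<noteq> {} \<and> B \<noteq> {} \<and> A \<inter> B = {} \<and> A \<union> B = V \<and>
        (\<forall>x\<in>V. \<forall>y\<in>V. E x y \<longleftrightarrow> (x \<in> A \<and> y \<in> B) \<or> (x \<in> B \<and> y \<in> A)))"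

definition iso_C5 :: "'a set \<Rightarrow> ('a \<Rightarrow> 'a \<Rightarrow> bool) \<Rightarrow> bool" where
  "iso_C5 V E \<longleftrightarrow>
     (\<exists>f. bij_betw f V {0..<(5::nat)} \<and>
        (\<forall>x\<in>V. \<forall>y\<in>V. E x y \<longleftrightarrow> (f x + 1) mod 5 = f y \<or> (f y + 1) mod 5 = f x))"

end

theory Submission
  imports Defs
begin

(* Since \<Gamma> is connected but not complete, some 2-arc is an induced path; 2-arc-transitivity
   moves every 2-arc onto it, so \<Gamma> is triangle-free, and then c \<ge> 1 gives diameter 2.
   Counting the edges between \<Gamma>(u) and \<Gamma>\<^sub>2(u) yields k (k - 1) = c |\<Gamma>\<^sub>2(u)|.
   If |\<Gamma>\<^sub>2(u)| \<le> k this forces c = k, where all of \<Gamma>\<^sub>2(u) is joined to all of \<Gamma>(u)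
   (complete bipartite), or c = k - 1, where two adjacent vertices of \<Gamma>\<^sub>2(u) have disjoint
   traces of size k - 1 on \<Gamma>(u), so k = 2 and \<Gamma> is the pentagon. *)

lemma rtranclp_eq_or_adjacent:
  assumes closed: "\<And>x y z. E x y \<Longrightarrow> E y z \<Longrightarrow> x \<noteq> z \<Longrightarrow> E x z"
  shows "E\<^sup>*\<^sup>* x y \<Longrightarrow> x = y \<or> E x y"
proof (induction rule: rtranclp_induct)
  case base then show ?case by simp
next
  case (step y z) then show ?case using closed by blast
qed

lemma sum_card_nbrs_Int_commute:
  assumes "finite N" "finite M" "N \<subseteq> V" "M \<subseteq> V" "\<And>x y. E x y \<Longrightarrow> E y x"
  shows "(\<Sum>v\<in>N. card (nbrs V E v \<inter> M)) = (\<Sum>w\<in>M. card (nbrs V E w \<inter> N))"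
proof -
  let ?NM = "Sigma N (\<lambda>v. nbrs V E v \<inter> M)"
  let ?MN = "Sigma M (\<lambda>w. nbrs V E w \<inter> N)"
  have "?MN = prod.swap ` ?NM"
    using assms(3-5) by (auto simp: nbrs_def image_iff)
  then have "card ?MN = card ?NM"
    by (simp add: card_image)
  then show ?thesis
    using assms(1,2) by (simp add: card_SigmaI)
qed

lemma iso_C5I:
  assumes V: "V = {v0, v1, v2, v3, v4}" and distinct: "distinct [v0, v1, v2, v3, v4]"
    and sym: "\<And>x y. E x y \<Longrightarrow> E y x" and irrefl: "\<And>x. \<not> E x x"
    and cycle: "E v0 v1" "E v1 v2" "E v2 v3" "E v3 v4" "E v4 v0"
    and chords: "\<not> E v0 v2" "\<not> E v0 v3" "\<not> E v1 v3" "\<not> E v1 v4" "\<not> E v2 v4"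
  shows "iso_C5 V E"
proof -
  define f where "f x = (if x = v0 then 0 else if x = v1 then 1 else if x = v2 then 2
                         else if x = v3 then 3 else (4::nat))" for x
  have f: "f v0 = 0" "f v1 = 1" "f v2 = 2" "f v3 = 3" "f v4 = 4"
    using distinct by (auto simp: f_def)
  have "bij_betw f V {0..<5}"
    by (rule bij_betw_imageI) (auto simp: V f inj_on_def)
  moreover have "\<forall>x\<in>V. \<forall>y\<in>V. E x y \<longleftrightarrow> (f x + 1) mod 5 = f y \<or> (f y + 1) mod 5 = f x"
    unfolding V using f cycle chords irrefl by (auto dest: sym)
  ultimately show ?thesis
    unfolding iso_C5_def by blast
qed

locale srg =
  fixes V :: "'a set" and E :: "'a \<Rightarrow> 'a \<Rightarrow> bool" and n k a c :: nat
  assumes strongly_regular: "strongly_regular V E n k a c"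
begin

lemma finite_V: "finite V"
  and adj_in_V: "E x y \<Longrightarrow> x \<in> V \<and> y \<in> V"
  and adj_sym: "E x y \<Longrightarrow> E y x"
  and adj_irrefl: "\<not> E x x"
  and connected: "x \<in> V \<Longrightarrow> y \<in> V \<Longrightarrow> E\<^sup>*\<^sup>* x y"
  and non_complete: "\<exists>x\<in>V. \<exists>y\<in>V. x \<noteq> y \<and> \<not> E x y"
  and degree: "u \<in> V \<Longrightarrow> card (nbrs V E u) = k"
  and common_nbrs_nonadj:
    "x \<in> V \<Longrightarrow> y \<in> V \<Longrightarrow> x \<noteq> y \<Longrightarrow> \<not> E x y \<Longrightarrow> card (nbrs V E x \<inter> nbrs V E y) = c"
  using strongly_regular
  unfolding strongly_regular_def simple_graph_def graph_connected_def by simp_all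

lemma finite_nbrs: "finite (nbrs V E u)"
  using finite_V by (simp add: nbrs_def)

lemma mem_nbrs_iff: "v \<in> nbrs V E u \<longleftrightarrow> E u v"
  using adj_in_V by (auto simp: nbrs_def)

lemma induced_2path_exists: "\<exists>x y z. E x y \<and> E y z \<and> x \<noteq> z \<and> \<not> E x z"
proof (rule ccontr)
  assume "\<nexists>x y z. E x y \<and> E y z \<and> x \<noteq> z \<and> \<not> E x z"
  then have "x = y \<or> E x y" if "x \<in> V" "y \<in> V" for x y
    using rtranclp_eq_or_adjacent[OF _ connected[OF that]] by blast
  then show False
    using non_complete by blast
qed

lemma one_le_c: "1 \<le> c"
proof -
  obtain x y z where xyz: "E x y" "E y z" "x \<noteq> z" "\<not> E x z"
    using induced_2path_exists by blast
  then have "y \<in> nbrs V E x \<inter> nbrs V E z"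
    by (simp add: mem_nbrs_iff adj_sym)
  then have "card (nbrs V E x \<inter> nbrs V E z) \<noteq> 0"
    using finite_nbrs by auto
  with xyz show ?thesis
    using common_nbrs_nonadj adj_in_V by fastforce
qed

lemma c_le_k: "c \<le> k"
proof -
  obtain x y where "x \<in> V" "y \<in> V" "x \<noteq> y" "\<not> E x y"
    using non_complete by blast
  then have "c = card (nbrs V E x \<inter> nbrs V E y)"
    by (simp add: common_nbrs_nonadj)
  also have "\<dots> \<le> card (nbrs V E x)"
    by (simp add: card_mono finite_nbrs)
  finally show ?thesis
    using degree \<open>x \<in> V\<close> by simp
qed

lemma nbrs2_eq: "nbrs2 V E u = V - insert u (nbrs V E u)" if "u \<in> V"
proof -
  have "w \<in> nbrs2 V E u" if w: "w \<in> V" "w \<noteq> u" "\<not> E u w" for w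
  proof -
    have "card (nbrs V E u \<inter> nbrs V E w) \<noteq> 0"
      using common_nbrs_nonadj[OF \<open>u \<in> V\<close> w(1)] w one_le_c by auto
    then obtain v where "v \<in> nbrs V E u \<inter> nbrs V E w"
      by (metis card.empty ex_in_conv)
    then have "E u v" "E w v"
      by (simp_all add: mem_nbrs_iff)
    with w show ?thesis
      by (auto simp: nbrs2_def dest: adj_sym)
  qed
  then show ?thesis
    by (auto simp: nbrs2_def mem_nbrs_iff)
qed

lemma finite_nbrs2: "finite (nbrs2 V E u)"
  using finite_V by (simp add: nbrs2_def)

lemma nbrs_Int_nbrs2: "nbrs V E u \<inter> nbrs2 V E u = {}"
  by (auto simp: nbrs2_def mem_nbrs_iff)

lemma V_eq_insert_nbrs_nbrs2: "u \<in> V \<Longrightarrow> V = insert u (nbrs V E u \<union> nbrs2 V E u)"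
  by (auto simp: nbrs2_eq nbrs_def)

lemma card_nbrs_Int_nbrs_of_nbrs2:
  "u \<in> V \<Longrightarrow> w \<in> nbrs2 V E u \<Longrightarrow> card (nbrs V E w \<inter> nbrs V E u) = c"
  using common_nbrs_nonadj[of u w] by (auto simp: nbrs2_def Int_commute)

lemma triangle_free_if_two_arc_transitive:
  assumes "two_arc_transitive V E" and "E x y" "E y z"
  shows "\<not> E x z"
proof
  assume "E x z"
  then have "x \<noteq> z"
    using adj_irrefl by blast
  obtain p q r where pqr: "E p q" "E q r" "p \<noteq> r" "\<not> E p r"
    using induced_2path_exists by blast
  then obtain \<sigma> where \<sigma>: "is_aut V E \<sigma>" "\<sigma> x = p" "\<sigma> z = r"
    using assms \<open>x \<noteq> z\<close> unfolding two_arc_transitive_def by blast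
  have "x \<in> V" "z \<in> V"
    using adj_in_V \<open>E x z\<close> by blast+
  with \<sigma> \<open>E x z\<close> have "E p r"
    unfolding is_aut_def by blast
  with pqr show False by blast
qed

end

locale triangle_free_srg = srg +
  assumes triangle_free: "E x y \<Longrightarrow> E y z \<Longrightarrow> \<not> E x z"
begin

lemma card_nbrs_Int_nbrs2_of_nbrs:
  assumes u: "u \<in> V" and v: "v \<in> nbrs V E u"
  shows "card (nbrs V E v \<inter> nbrs2 V E u) = k - 1"
proof -
  have "nbrs V E v \<inter> nbrs2 V E u = nbrs V E v - {u}"
    using u v triangle_free by (auto simp: nbrs2_eq mem_nbrs_iff dest: adj_sym adj_in_V)
  moreover have "u \<in> nbrs V E v"
    using v by (simp add: mem_nbrs_iff adj_sym)
  ultimately show ?thesis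
    using v degree adj_in_V by (simp add: mem_nbrs_iff)
qed

lemma edge_count_nbrs_nbrs2:
  assumes u: "u \<in> V"
  shows "k * (k - 1) = card (nbrs2 V E u) * c"
proof -
  let ?N = "nbrs V E u" and ?M = "nbrs2 V E u"
  have "k * (k - 1) = (\<Sum>v\<in>?N. card (nbrs V E v \<inter> ?M))"
    using card_nbrs_Int_nbrs2_of_nbrs[OF u] degree[OF u] by simp
  also have "\<dots> = (\<Sum>w\<in>?M. card (nbrs V E w \<inter> ?N))"
    by (rule sum_card_nbrs_Int_commute[OF finite_nbrs finite_nbrs2])
      (auto simp: adj_sym nbrs_def nbrs2_def)
  also have "\<dots> = card ?M * c"
    using card_nbrs_Int_nbrs_of_nbrs2[OF u] by simp
  finally show ?thesis .
qed

lemma complete_bipartite_if_c_eq_k: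
  assumes u: "u \<in> V" and "c = k"
  shows "complete_bipartite V E"
proof -
  let ?N = "nbrs V E u" and ?M = "insert u (nbrs2 V E u)"
  have partition: "?M \<inter> ?N = {}" "?M \<union> ?N = V"
    using u nbrs_Int_nbrs2 by (auto simp: nbrs2_eq adj_irrefl mem_nbrs_iff dest: adj_in_V)
  have M_adj: "E w x \<longleftrightarrow> x \<in> ?N" if w: "w \<in> ?M" for w x
  proof (cases "w = u")
    case False
    then have w: "w \<in> nbrs2 V E u" "w \<in> V"
      using w by (auto simp: nbrs2_def)
    have "nbrs V E w \<inter> ?N = ?N"
      using card_nbrs_Int_nbrs_of_nbrs2[OF u w(1)] \<open>c = k\<close> degree[OF u]
      by (intro card_subset_eq) (simp_all add: finite_nbrs)
    then have "nbrs V E w = ?N"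
      using degree[OF w(2)] degree[OF u]
      by (intro card_subset_eq[symmetric]) (auto simp: finite_nbrs)
    then show ?thesis
      by (simp flip: mem_nbrs_iff)
  qed (simp add: mem_nbrs_iff)
  have N_adj: "E x y \<longleftrightarrow> y \<in> ?M" if x: "x \<in> ?N" and y: "y \<in> V" for x y
  proof
    assume "E x y"
    moreover have "E u x"
      using x by (simp add: mem_nbrs_iff)
    ultimately have "y \<notin> ?N"
      using triangle_free by (simp add: mem_nbrs_iff)
    with y partition show "y \<in> ?M" by blast
  next
    assume "y \<in> ?M"
    with x M_adj show "E x y" by (blast intro: adj_sym)
  qed
  have adj_iff: "E x y \<longleftrightarrow> x \<in> ?M \<and> y \<in> ?N \<or> x \<in> ?N \<and> y \<in> ?M"
    if "x \<in> V" "y \<in> V" for x y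
  proof (cases "x \<in> ?N")
    case True
    then show ?thesis
      using N_adj[OF True \<open>y \<in> V\<close>] partition(1) by blast
  next
    case False
    then have "x \<in> ?M"
      using \<open>x \<in> V\<close> partition(2) by blast
    then show ?thesis
      using M_adj False by blast
  qed
  have "?N \<noteq> {}"
    using one_le_c \<open>c = k\<close> degree[OF u] by auto
  then show ?thesis
    unfolding complete_bipartite_def
    by (intro exI[of _ ?M] exI[of _ ?N] conjI ballI adj_iff partition) simp_all
qed

lemma no_common_nbr_if_adjacent: "E x y \<Longrightarrow> nbrs V E x \<inter> nbrs V E y = {}"
  using triangle_free by (auto simp: mem_nbrs_iff dest: adj_sym)

lemma card_nbrs2_if_Suc_c_eq_k:
  assumes u: "u \<in> V" and "Suc c = k"
  shows "card (nbrs2 V E u) = k"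
proof -
  have "card (nbrs2 V E u) * c = k * c"
    using edge_count_nbrs_nbrs2[OF u] \<open>Suc c = k\<close> by (metis diff_Suc_1 mult.commute)
  then show ?thesis
    using one_le_c by simp
qed

lemma adjacent_pair_in_nbrs2:
  assumes u: "u \<in> V" and "Suc c = k"
  obtains w w' where "w \<in> nbrs2 V E u" "w' \<in> nbrs2 V E u" "E w w'"
proof -
  let ?N = "nbrs V E u" and ?M = "nbrs2 V E u"
  have "?M \<noteq> {}"
    using card_nbrs2_if_Suc_c_eq_k[OF assms] one_le_c \<open>Suc c = k\<close> by auto
  then obtain w where w: "w \<in> ?M" by blast
  then have "w \<in> V"
    by (simp add: nbrs2_def)
  have "card (nbrs V E w \<inter> ?N) < card (nbrs V E w)"
    using card_nbrs_Int_nbrs_of_nbrs2[OF u w] degree[OF \<open>w \<in> V\<close>] \<open>Suc c = k\<close> by simp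
  then obtain w' where "E w w'" "w' \<notin> ?N"
    by (metis inf.absorb1 less_irrefl mem_nbrs_iff subsetI)
  moreover have "w' \<in> ?M"
  proof -
    have "w' \<noteq> u"
      using w \<open>E w w'\<close> by (auto simp: nbrs2_def dest: adj_sym)
    with \<open>w' \<notin> ?N\<close> \<open>E w w'\<close> show ?thesis
      using u by (auto simp: nbrs2_eq dest: adj_in_V)
  qed
  ultimately show ?thesis
    using w that by blast
qed

lemma k_eq_2_if_Suc_c_eq_k:
  assumes u: "u \<in> V" and "Suc c = k"
  shows "k = 2"
proof -
  let ?N = "nbrs V E u"
  obtain w w' where w: "w \<in> nbrs2 V E u" "w' \<in> nbrs2 V E u" "E w w'"
    using adjacent_pair_in_nbrs2[OF assms] .
  have "(nbrs V E w \<inter> ?N) \<inter> (nbrs V E w' \<inter> ?N) = {}"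
    using no_common_nbr_if_adjacent[OF w(3)] by blast
  then have "c + c = card ((nbrs V E w \<inter> ?N) \<union> (nbrs V E w' \<inter> ?N))"
    using card_nbrs_Int_nbrs_of_nbrs2[OF u] w by (simp add: card_Un_disjoint finite_nbrs)
  also have "\<dots> \<le> card ?N"
    by (intro card_mono finite_nbrs) blast
  finally show ?thesis
    using degree[OF u] one_le_c \<open>Suc c = k\<close> by simp
qed

lemma iso_C5_if_Suc_c_eq_k:
  assumes u: "u \<in> V" and "Suc c = k"
  shows "iso_C5 V E"
proof -
  let ?N = "nbrs V E u" and ?M = "nbrs2 V E u"
  have k: "k = 2" and c: "c = 1"
    using k_eq_2_if_Suc_c_eq_k[OF assms] \<open>Suc c = k\<close> by simp_all
  obtain w w' where w: "w \<in> ?M" "w' \<in> ?M" "E w w'"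
    using adjacent_pair_in_nbrs2[OF assms] .
  obtain p where p: "nbrs V E w \<inter> ?N = {p}"
    using card_nbrs_Int_nbrs_of_nbrs2[OF u w(1)] c card_1_singletonE by blast
  obtain q where q: "nbrs V E w' \<inter> ?N = {q}"
    using card_nbrs_Int_nbrs_of_nbrs2[OF u w(2)] c card_1_singletonE by blast
  have "p \<noteq> q"
    using no_common_nbr_if_adjacent[OF w(3)] p q by blast
  have N: "?N = {p, q}"
    using p q \<open>p \<noteq> q\<close> degree[OF u] k
    by (intro card_subset_eq[symmetric] finite_nbrs) auto
  have "w \<noteq> w'"
    using w(3) adj_irrefl by blast
  have M: "?M = {w, w'}"
    using w \<open>w \<noteq> w'\<close> card_nbrs2_if_Suc_c_eq_k[OF assms] k
    by (intro card_subset_eq[symmetric] finite_nbrs2) auto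
  have V: "V = {u, p, w, w', q}"
    using V_eq_insert_nbrs_nbrs2[OF u] by (simp add: N M insert_commute)
  have "u \<notin> ?N" "u \<notin> ?M" "?N \<inter> ?M = {}"
    using nbrs_Int_nbrs2 by (auto simp: mem_nbrs_iff adj_irrefl nbrs2_def)
  then have distinct: "distinct [u, p, w, w', q]"
    using N M \<open>p \<noteq> q\<close> \<open>w \<noteq> w'\<close> by auto
  have "p \<in> nbrs V E w" "p \<in> ?N" "q \<in> nbrs V E w'" "q \<in> ?N"
    using p q by blast+
  then have cycle: "E u p" "E p w" "E w w'" "E w' q" "E q u"
    using w(3) by (simp_all add: mem_nbrs_iff adj_sym)
  have "\<not> E p w'"
  proof
    assume "E p w'"
    then have "p \<in> nbrs V E w' \<inter> ?N"
      using cycle by (simp add: mem_nbrs_iff adj_sym)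
    with q \<open>p \<noteq> q\<close> show False by simp
  qed
  moreover have "\<not> E w q"
  proof
    assume "E w q"
    then have "q \<in> nbrs V E w \<inter> ?N"
      using cycle by (simp add: mem_nbrs_iff adj_sym)
    with p \<open>p \<noteq> q\<close> show False by simp
  qed
  moreover have "\<not> E u w" "\<not> E u w'"
    using w(1,2) by (simp_all add: nbrs2_def)
  moreover have "\<not> E p q"
    using triangle_free[OF adj_sym[OF cycle(1)]] adj_sym[OF cycle(5)] by blast
  ultimately show ?thesis
    using iso_C5I[OF V distinct adj_sym adj_irrefl cycle] adj_sym by blast
qed

lemma complete_bipartite_or_iso_C5_if_card_nbrs2_le:
  assumes u: "u \<in> V" and "card (nbrs2 V E u) \<le> k"
  shows "complete_bipartite V E \<or> iso_C5 V E"
proof -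
  have "k * (k - 1) \<le> k * c"
    using edge_count_nbrs_nbrs2[OF u] \<open>card (nbrs2 V E u) \<le> k\<close> by (simp add: mult.commute)
  then have "k - 1 \<le> c"
    using one_le_c c_le_k by simp
  then have "c = k \<or> Suc c = k"
    using c_le_k by linarith
  then show ?thesis
    using complete_bipartite_if_c_eq_k[OF u] iso_C5_if_Suc_c_eq_k[OF u] by blast
qed

end

theorem lemma4p2:
  fixes V :: "'a set" and E :: "'a \<Rightarrow> 'a \<Rightarrow> bool"
  assumes "strongly_regular V E n k a c"
    and "two_arc_transitive V E"
  shows "complete_bipartite V E \<or> iso_C5 V E \<or>
         (\<forall>u\<in>V. card (nbrs V E u) < card (nbrs2 V E u))"
proof -
  interpret srg V E n k a c
    using assms(1) by unfold_locales
  interpret triangle_free_srg V E n k a c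
    using triangle_free_if_two_arc_transitive[OF assms(2)] by unfold_locales
  show ?thesis
    using complete_bipartite_or_iso_C5_if_card_nbrs2_le degree by force
qed

end
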